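(* Let $b>a\ge0$, let $w$ be a palindrome and let $x\in\mathbb{R}$ satisfy $x\ge\phi_w(0)$. Let $m=|10w|$, $v(x)=(x,1)^T$ and for $n\in\mathbb{Z}_+$, $k=1,\dots,m$ define $$x_{nm+k}(x)=\big[M\big((10w)^n(10w)_{1:k}\big)v(x)\big]_2,\qquad y_{nm+k}(x)=\big[M\big((01w)^n(01w)_{1:k}\big)v(x)\big]_2,$$ $\sigma_x^{(n)}=(x_{nm+1}(x),\dots,x_{nm+m}(x))$ and $\sigma_y^{(n)}=(y_{nm+1}(x),\dots,y_{nm+m}(x))$. Then for every $n\in\mathbb{Z}_+$, $\sigma_x^{(n)}$ and $\sigma_y^{(n)}$ are non-decreasing sequences of non-negative reals and $\sigma_x^{(n)}\prec^w\sigma_y^{(n)}$; i.e. $\sum_{k=1}^{j}x_{nm+k}(x)\ge\sum_{k=1}^{j}y_{nm+k}(x)$ for all $j=1,\dots,m$.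
   Context: Words are finite strings over $\{0,1\}$, $\epsilon$ the empty word, $w_k$ the $k$-th letter, $w_{1:k}=w_1\cdots w_k$, $|w|$ the length, $w^n$ the $n$-fold repetition, $\mathbb{Z}_+=\{0,1,2,\dots\}$; a palindrome is a word equal to its reverse. Define $F=\begin{pmatrix}1&1\\ a&1+a\end{pmatrix}$, $G=\begin{pmatrix}1&1\\ b&1+b\end{pmatrix}$, and for a word $w$, $M(w):=M(w_{|w|})\cdots M(w_1)$ with $M(\epsilon)=I$, $M(0)=F$, $M(1)=G$. $[u]_2$ is the second component of a vector $u$. With $\phi_0(x)=\frac{x+1}{ax+a+1}$, $\phi_1(x)=\frac{x+1}{bx+b+1}$ and $\phi_w=\phi_{w_{|w|}}\circ\cdots\circ\phi_{w_1}$, one has $\phi_w(0)=[M(w)]_{12}/[M(w)]_{22}$. For $x,y\in\mathbb{R}^m$ with entries sorted ascending as $x_{(1)}\le\dots\le x_{(m)}$, weak supermajorisation $x\prec^w y$ means $\sum_{k=1}^j x_{(k)}\ge\sum_{k=1}^j y_{(k)}$ for all $j=1,\dots,m$. *)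

theory Defs
  imports "HOL-Analysis.Analysis"
begin

text \<open>Words over {0,1} are bool lists: False = letter 0, True = letter 1.
  Matrices are real^2^2 (rows indexed 1,2); entry (i,j) is M $ i $ j.\<close>

definition Fmat :: "real \<Rightarrow> real^2^2" where
  "Fmat a = vector [vector [1, 1], vector [a, 1 + a]]"

definition letterM :: "real \<Rightarrow> real \<Rightarrow> bool \<Rightarrow> real^2^2" where
  "letterM a b c = (if c then Fmat b else Fmat a)"

fun Mw :: "real \<Rightarrow> real \<Rightarrow> bool list \<Rightarrow> real^2^2" where
  "Mw a b [] = mat 1"
| "Mw a b (c # w) = Mw a b w ** letterM a b c"

definition phi :: "real \<Rightarrow> real \<Rightarrow> bool \<Rightarrow> real \<Rightarrow> real" where
  "phi a b c x = (if c then (x + 1) / (b * x + b + 1) else (x + 1) / (a * x + a + 1))"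

text \<open>phi_w = phi_{w_|w|} o ... o phi_{w_1}: w_1 is applied first.\<close>
definition phiw :: "real \<Rightarrow> real \<Rightarrow> bool list \<Rightarrow> real \<Rightarrow> real" where
  "phiw a b w x = foldl (\<lambda>y c. phi a b c y) x w"

definition wpow :: "bool list \<Rightarrow> nat \<Rightarrow> bool list" where
  "wpow u n = concat (replicate n u)"

definition seqval :: "real \<Rightarrow> real \<Rightarrow> bool list \<Rightarrow> nat \<Rightarrow> nat \<Rightarrow> real \<Rightarrow> real" where
  "seqval a b u n k x = (Mw a b (wpow u n @ take k u) *v vector [x, 1]) $ 2"

end

theory Submission
  imports Defs
begin

text \<open>Every \<open>F\<^sub>t\<close> raises the coordinate sum \<open>z\<^sub>1 + z\<^sub>2\<close> of a vector by exactly the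
  second coordinate of its image, so the partial sums of both sequences telescope to gains of the
  coordinate sum along prefixes of \<open>10w\<close> and \<open>01w\<close>; positivity and monotonicity come from the
  non-negative entries of the matrices.
  The intertwining \<open>F\<^sub>t\<^sup>T J = J F\<^sub>t\<close> with \<open>J = [[0,1],[1,1]]\<close> gives \<open>M(rev u)\<^sup>T J = J M(u)\<close>,
  so the entry \<open>M\<^sub>2\<^sub>1\<close> and the second column sum of \<open>M(u)\<close> do not change under reversal.
  Since \<open>w\<close> is a palindrome, this lets one compare the powers of \<open>M(10w)\<close> and \<open>M(01w)\<close> by induction
  on the period: applied to \<open>e\<^sub>1\<close> the former dominates coordinatewise, and applied to \<open>M(w) e\<^sub>2\<close> the
  two have the same coordinate sum while the first coordinate of the former exceeds that of the
  latter by at most \<open>(b - a)\<close> times that sum. These invariants give the majorisation for the two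
  starting vectors, and \<open>x \<ge> \<phi>\<^sub>w(0)\<close> writes \<open>(x, 1)\<close> as a non-negative combination of them.\<close>

lemma mat2_mult_vec_nth:
  "((A::real^2^2) *v z)$1 = A$1$1 * z$1 + A$1$2 * z$2"
  "((A::real^2^2) *v z)$2 = A$2$1 * z$1 + A$2$2 * z$2"
  by (simp_all add: matrix_vector_mult_def sum_2)

lemma mat2_mult_nth: "((A::real^2^2) ** B)$i$j = A$i$1 * B$1$j + A$i$2 * B$2$j"
  by (simp add: matrix_matrix_mult_def sum_2)

lemma mat2_eq_iff:
  "(A::real^2^2) = B \<longleftrightarrow> A$1$1 = B$1$1 \<and> A$1$2 = B$1$2 \<and> A$2$1 = B$2$1 \<and> A$2$2 = B$2$2"
  by (auto simp: vec_eq_iff forall_2)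

lemma Fmat_nth: "Fmat t $1$1 = 1" "Fmat t $1$2 = 1" "Fmat t $2$1 = t" "Fmat t $2$2 = 1 + t"
  by (simp_all add: Fmat_def)

lemma mat1_2_nth:
  "(mat 1::real^2^2)$1$1 = 1" "(mat 1::real^2^2)$1$2 = 0"
  "(mat 1::real^2^2)$2$1 = 0" "(mat 1::real^2^2)$2$2 = 1"
  by (simp_all add: mat_def)

lemma det_Fmat: "det (Fmat t) = 1"
  by (simp add: det_2 Fmat_nth)

lemma Fmat_mult_vec_nth: "(Fmat t *v z)$1 = z$1 + z$2" "(Fmat t *v z)$2 = t * z$1 + (1 + t) * z$2"
  by (simp_all add: mat2_mult_vec_nth Fmat_nth)

lemma Fmat_mult_Fmat_mult_vec_nth:
  "((Fmat p ** Fmat q) *v z)$1 = (1 + q) * z$1 + (2 + q) * z$2"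
  "((Fmat p ** Fmat q) *v z)$2 = (p + q + p * q) * z$1 + (1 + 2 * p + q + p * q) * z$2"
  by (simp_all add: mat2_mult_vec_nth mat2_mult_nth Fmat_nth algebra_simps)

lemma letterM_eq_Fmat: "letterM a b c = Fmat (if c then b else a)"
  by (simp add: letterM_def)

lemma Mw_append: "Mw a b (u @ v) = Mw a b v ** Mw a b u"
  by (induction u) (auto simp: matrix_mul_assoc)

lemma Mw_snoc: "Mw a b (u @ [c]) = letterM a b c ** Mw a b u"
  by (simp add: Mw_append)

lemma Mw_take_Suc:
  "k < length u \<Longrightarrow> Mw a b (take (Suc k) u) = Fmat (if u ! k then b else a) ** Mw a b (take k u)"
  by (simp add: take_Suc_conv_app_nth Mw_snoc letterM_eq_Fmat)

lemma det_Mw: "det (Mw a b u) = 1"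
  by (induction u) (simp_all add: det_mul det_I letterM_eq_Fmat det_Fmat)

lemma Mw_nth_bounds:
  assumes "0 \<le> a" "0 \<le> b"
  shows "0 \<le> Mw a b u $1$2" "0 \<le> Mw a b u $2$1" "1 \<le> Mw a b u $1$1" "1 \<le> Mw a b u $2$2"
proof -
  have "0 \<le> Mw a b u $1$2 \<and> 0 \<le> Mw a b u $2$1 \<and> 1 \<le> Mw a b u $1$1 \<and> 1 \<le> Mw a b u $2$2"
  proof (induction u)
    case (Cons c u)
    define t where "t = (if c then b else a)"
    define M where "M = Mw a b u"
    have "0 \<le> t" using assms by (simp add: t_def)
    then have "0 \<le> M$1$1 * t" "0 \<le> M$1$2 * t" "0 \<le> M$2$1 * t" "0 \<le> M$2$2 * t"
      using Cons.IH by (simp_all add: M_def)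
    with Cons.IH show ?case
      by (simp add: letterM_eq_Fmat mat2_mult_nth Fmat_nth algebra_simps flip: t_def M_def)
  qed (simp add: mat1_2_nth)
  then show "0 \<le> Mw a b u $1$2" "0 \<le> Mw a b u $2$1" "1 \<le> Mw a b u $1$1" "1 \<le> Mw a b u $2$2"
    by auto
qed

lemma Mw_col_sum_le:
  assumes "0 \<le> a" "0 \<le> b"
  shows "Mw a b u $1$1 + Mw a b u $2$1 \<le> Mw a b u $1$2 + Mw a b u $2$2"
proof (cases u)
  case (Cons c v)
  then show ?thesis
    using Mw_nth_bounds[OF assms, of v]
    by (simp add: letterM_eq_Fmat mat2_mult_nth Fmat_nth algebra_simps)
qed (simp add: mat1_2_nth)

definition Jmat :: "real^2^2" where
  "Jmat = vector [vector [0, 1], vector [1, 1]]"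

lemma Fmat_transpose_Jmat: "transpose (Fmat t) ** Jmat = Jmat ** Fmat t"
  by (simp add: mat2_eq_iff mat2_mult_nth Fmat_nth Jmat_def transpose_def)

lemma Mw_rev_transpose_Jmat: "transpose (Mw a b (rev u)) ** Jmat = Jmat ** Mw a b u"
proof (induction u)
  case (Cons c u)
  have "transpose (Mw a b (rev (c # u))) ** Jmat
      = transpose (Mw a b (rev u)) ** (transpose (letterM a b c) ** Jmat)"
    by (simp add: Mw_snoc matrix_transpose_mul matrix_mul_assoc)
  also have "\<dots> = (transpose (Mw a b (rev u)) ** Jmat) ** letterM a b c"
    by (simp add: letterM_eq_Fmat Fmat_transpose_Jmat matrix_mul_assoc)
  also have "\<dots> = Jmat ** Mw a b (c # u)"
    by (simp add: Cons.IH matrix_mul_assoc)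
  finally show ?case .
qed (simp add: transpose_mat)

lemma Mw_rev_nth:
  "Mw a b (rev u) $2$1 = Mw a b u $2$1"
  "Mw a b (rev u) $1$2 + Mw a b (rev u) $2$2 = Mw a b u $1$2 + Mw a b u $2$2"
  using Mw_rev_transpose_Jmat[of a b u]
  by (simp_all add: mat2_eq_iff mat2_mult_nth Jmat_def transpose_def)

definition coord_sum :: "real^2 \<Rightarrow> real" where
  "coord_sum z = z$1 + z$2"

lemma coord_sum_Fmat_mult: "coord_sum (Fmat t *v z) = coord_sum z + (Fmat t *v z)$2"
  by (simp add: coord_sum_def Fmat_mult_vec_nth algebra_simps)

lemma coord_sum_mult_vec: "coord_sum ((A::real^2^2) *v z) = (A$1$1 + A$2$1) * z$1 + (A$1$2 + A$2$2) * z$2"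
  by (simp add: coord_sum_def mat2_mult_vec_nth algebra_simps)

definition prefix_gain :: "real \<Rightarrow> real \<Rightarrow> bool list \<Rightarrow> nat \<Rightarrow> real^2 \<Rightarrow> real" where
  "prefix_gain a b u j z = coord_sum (Mw a b (take j u) *v z) - coord_sum z"

lemma sum_prefix_second_eq_prefix_gain:
  "j \<le> length u \<Longrightarrow> (\<Sum>k=1..j. (Mw a b (take k u) *v z)$2) = prefix_gain a b u j z"
proof (induction j)
  case (Suc j)
  then show ?case
    by (simp add: prefix_gain_def Mw_take_Suc coord_sum_Fmat_mult flip: matrix_vector_mul_assoc)
qed (simp add: prefix_gain_def)

lemma prefix_gain_linear:
  fixes A :: "real^2^2"
  shows "prefix_gain a b u j (A *v z)
     = z$1 * prefix_gain a b u j (A *v vector [1, 0]) + z$2 * prefix_gain a b u j (A *v vector [0, 1])"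
  by (simp add: prefix_gain_def matrix_vector_mul_assoc coord_sum_mult_vec mat2_mult_vec_nth algebra_simps)

lemma Fmat_mult_vec_second_ge:
  assumes "0 \<le> t" "0 \<le> z$1" "0 \<le> z$2"
  shows "z$2 \<le> (Fmat t *v z)$2"
  using assms by (simp add: Fmat_mult_vec_nth algebra_simps)

lemma Mw_mult_vec_nonneg:
  assumes "0 \<le> a" "0 \<le> b" "0 \<le> z$1" "0 \<le> z$2"
  shows "0 \<le> (Mw a b u *v z)$1" "0 \<le> (Mw a b u *v z)$2"
  using Mw_nth_bounds[OF assms(1,2), of u] assms(3,4)
  by (simp_all add: mat2_mult_vec_nth)

lemma coord_sum_le_Mw_mult_vec:
  assumes "0 \<le> a" "0 \<le> b" "0 \<le> z$1" "0 \<le> z$2"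
  shows "coord_sum z \<le> coord_sum (Mw a b u *v z)"
proof -
  have "1 * z$1 \<le> (Mw a b u $1$1 + Mw a b u $2$1) * z$1"
       "1 * z$2 \<le> (Mw a b u $1$2 + Mw a b u $2$2) * z$2"
    using Mw_nth_bounds[OF assms(1,2), of u] assms(3,4) by (intro mult_right_mono; simp)+
  then show ?thesis
    unfolding coord_sum_mult_vec by (simp add: coord_sum_def)
qed

lemma phiw_snoc: "phiw a b (u @ [c]) y = phi a b c (phiw a b u y)"
  by (simp add: phiw_def)

lemma phiw_eq_Mw_ratio:
  assumes "0 \<le> a" "0 \<le> b"
  shows "phiw a b u 0 = Mw a b u $1$2 / Mw a b u $2$2"
proof (induction u rule: rev_induct)
  case (snoc c u)
  define t where "t = (if c then b else a)"
  define p q where "p = Mw a b u $1$2" and "q = Mw a b u $2$2"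
  have "0 \<le> t" using assms by (simp add: t_def)
  moreover have "0 \<le> p" "1 \<le> q"
    using Mw_nth_bounds[OF assms, of u] by (auto simp: p_def q_def)
  ultimately have "p/q + 1 = (p + q)/q" "t * (p/q) + t + 1 = (t * p + (1 + t) * q)/q"
    by (simp_all add: field_simps)
  moreover have "Mw a b (u @ [c]) = Fmat t ** Mw a b u" "phi a b c y = (y + 1) / (t * y + t + 1)" for y
    by (simp_all add: Mw_snoc letterM_eq_Fmat phi_def t_def)
  ultimately show ?case
    using \<open>1 \<le> q\<close> by (simp add: phiw_snoc snoc.IH mat2_mult_nth Fmat_nth flip: p_def q_def)
qed (simp add: phiw_def mat1_2_nth)

lemma phiw_nonneg: "0 \<le> a \<Longrightarrow> 0 \<le> b \<Longrightarrow> 0 \<le> phiw a b u 0"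
  using Mw_nth_bounds[of a b u] by (simp add: phiw_eq_Mw_ratio)

lemma wpow_Suc: "wpow u (Suc n) = wpow u n @ u"
  by (induction n) (simp_all add: wpow_def)

lemma rev_wpow: "rev (wpow u n) = wpow (rev u) n"
  by (simp add: wpow_def rev_concat rev_map)

lemma append_wpow_shift: "xs @ wpow (ys @ xs) n = wpow (xs @ ys) n @ xs"
  by (induction n) (simp_all add: wpow_def)

lemma coord_sum_mult_vec_e2: "coord_sum ((A::real^2^2) *v vector [0, 1]) = A$1$2 + A$2$2"
  by (simp add: coord_sum_mult_vec)

lemma mult_vec_e1_second: "((A::real^2^2) *v vector [1, 0])$2 = A$2$1"
  by (simp add: mat2_mult_vec_nth)

lemma coord_sum_mult_diff_ge:
  fixes R :: "real^2^2"
  assumes "1 \<le> R$1$1" "0 \<le> R$2$1" "p$2 = q$2" "q$1 \<le> p$1"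
  shows "p$1 - q$1 \<le> coord_sum (R *v p) - coord_sum (R *v q)"
proof -
  have "coord_sum (R *v p) - coord_sum (R *v q) = (R$1$1 + R$2$1) * (p$1 - q$1)"
    using assms(3) by (simp add: coord_sum_mult_vec algebra_simps)
  moreover have "1 * (p$1 - q$1) \<le> (R$1$1 + R$2$1) * (p$1 - q$1)"
    using assms by (intro mult_right_mono) auto
  ultimately show ?thesis by simp
qed

lemma coord_sum_zero_first_coord:
  fixes W :: "real^2^2"
  assumes "coord_sum (W *v d) = 0"
  shows "(W$1$1 + W$2$1) * (W *v d)$1 = - det W * d$2"
proof -
  have "(W$1$1 + W$2$1) * (W *v d)$1 = (W$1$1 + W$2$1) * (W *v d)$1 - W$1$1 * coord_sum (W *v d)"
    using assms by simp
  also have "\<dots> = - det W * d$2"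
    by (simp add: det_2 coord_sum_mult_vec mat2_mult_vec_nth algebra_simps)
  finally show ?thesis .
qed

lemma coord_sum_right_factor_nonneg:
  fixes R Z :: "real^2^2"
  assumes "det R = 1" and "Z$1$1 + Z$2$1 \<le> Z$1$2 + Z$2$2"
    and "0 < (Z ** R)$1$1 + (Z ** R)$2$1"
    and "coord_sum ((Z ** R) *v d) = 0" and "d$2 \<le> 0"
  shows "0 \<le> coord_sum (R *v d)"
proof -
  have "((Z ** R)$1$1 + (Z ** R)$2$1) * coord_sum (R *v d)
      = ((Z ** R)$1$1 + (Z ** R)$2$1) * coord_sum (R *v d)
        - (R$1$1 + R$2$1) * coord_sum ((Z ** R) *v d)"
    using assms(4) by simp
  also have "\<dots> = - d$2 * ((Z$1$2 + Z$2$2) - (Z$1$1 + Z$2$1)) * det R"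
    by (simp add: det_2 coord_sum_mult_vec mat2_mult_vec_nth mat2_mult_nth algebra_simps)
  also have "\<dots> \<ge> 0"
    using assms(1,2,5) by (simp add: mult_nonpos_nonneg)
  finally show ?thesis
    using assms(3) by (simp add: zero_le_mult_iff)
qed

lemma seqval_eq:
  "seqval a b u n k x = (Mw a b (take k u) *v (Mw a b (wpow u n) *v vector [x, 1]))$2"
  by (simp add: seqval_def Mw_append matrix_vector_mul_assoc)

lemma seqval_nonneg:
  assumes "0 \<le> a" "0 \<le> b" "0 \<le> x"
  shows "0 \<le> seqval a b u n k x"
  using assms by (simp add: seqval_eq Mw_mult_vec_nonneg)

lemma seqval_mono:
  assumes "0 \<le> a" "0 \<le> b" "0 \<le> x" "k < length u"
  shows "seqval a b u n k x \<le> seqval a b u n (Suc k) x"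
proof -
  define z where "z = Mw a b (take k u) *v (Mw a b (wpow u n) *v vector [x, 1])"
  have "0 \<le> z$1" "0 \<le> z$2"
    using assms by (simp_all add: z_def Mw_mult_vec_nonneg)
  moreover have "seqval a b u n (Suc k) x = (Fmat (if u ! k then b else a) *v z)$2"
    using assms(4) by (simp add: seqval_eq z_def Mw_take_Suc flip: matrix_vector_mul_assoc)
  ultimately show ?thesis
    using assms(1,2) by (simp add: seqval_eq Fmat_mult_vec_second_ge flip: z_def)
qed

lemma sum_seqval_eq_prefix_gain:
  "j \<le> length u \<Longrightarrow>
    (\<Sum>k=1..j. seqval a b u n k x) = prefix_gain a b u j (Mw a b (wpow u n) *v vector [x, 1])"
  unfolding seqval_eq by (rule sum_prefix_second_eq_prefix_gain)

lemma one_le_cases: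
  assumes "1 \<le> (j::nat)"
  obtains "j = 1" | k where "j = Suc (Suc k)"
  using assms by (cases j; cases "j - 1") auto

context
  fixes a b :: real and w :: "bool list"
  assumes a_nonneg: "0 \<le> a" and a_less_b: "a < b" and palindrome: "rev w = w"
begin

lemma b_nonneg: "0 \<le> b"
  using a_nonneg a_less_b by simp

abbreviation "X n \<equiv> Mw a b (wpow (True # False # w) n)"
abbreviation "Y n \<equiv> Mw a b (wpow (False # True # w) n)"

abbreviation "xe n \<equiv> X n *v vector [1, 0]"
abbreviation "ye n \<equiv> Y n *v vector [1, 0]"
abbreviation "xw n \<equiv> X n *v (Mw a b w *v vector [0, 1])"
abbreviation "yw n \<equiv> Y n *v (Mw a b w *v vector [0, 1])"

lemma X_Suc_mult_vec: "X (Suc n) *v z = Mw a b w *v ((Fmat a ** Fmat b) *v (X n *v z))"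
  by (simp add: wpow_Suc Mw_append letterM_def matrix_vector_mul_assoc matrix_mul_assoc)

lemma Y_Suc_mult_vec: "Y (Suc n) *v z = Mw a b w *v ((Fmat b ** Fmat a) *v (Y n *v z))"
  by (simp add: wpow_Suc Mw_append letterM_def matrix_vector_mul_assoc matrix_mul_assoc)

lemma ye_nonneg: "0 \<le> ye n $1" "0 \<le> ye n $2"
  by (simp_all add: Mw_mult_vec_nonneg[OF a_nonneg b_nonneg])

lemma yw_nonneg: "0 \<le> yw n $1" "0 \<le> yw n $2"
  by (simp_all add: Mw_mult_vec_nonneg[OF a_nonneg b_nonneg])

lemma coord_sum_xw_eq_yw: "coord_sum (xw n) = coord_sum (yw n)"
proof -
  have "rev (w @ wpow (True # False # w) n) = w @ wpow (False # True # w) n"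
    using palindrome append_wpow_shift[of w "[False, True]" n] by (simp add: rev_wpow)
  then show ?thesis
    using Mw_rev_nth(2)[of a b "w @ wpow (True # False # w) n"]
    by (simp add: Mw_append matrix_vector_mul_assoc coord_sum_mult_vec_e2)
qed

lemma second_Fmat_mult_xe_eq_ye:
  "((Fmat a ** Fmat b) *v xe n)$2 = ((Fmat b ** Fmat a) *v ye n)$2"
proof -
  have "rev (wpow (True # False # w) n @ [True, False]) = wpow (False # True # w) n @ [False, True]"
    using palindrome append_wpow_shift[of "[False, True]" w n] by (simp add: rev_wpow)
  then show ?thesis
    using Mw_rev_nth(1)[of a b "wpow (True # False # w) n @ [True, False]"]
    by (simp add: Mw_append letterM_def matrix_vector_mul_assoc matrix_mul_assoc mult_vec_e1_second)
qed

lemma ye_le_xe: "ye n $1 \<le> xe n $1 \<and> ye n $2 \<le> xe n $2"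
proof (induction n)
  case 0
  then show ?case by (simp add: wpow_def)
next
  case (Suc n)
  define p q where "p = (Fmat a ** Fmat b) *v xe n" and "q = (Fmat b ** Fmat a) *v ye n"
  have "(1 + a) * ye n $1 \<le> (1 + b) * xe n $1" "(2 + a) * ye n $2 \<le> (2 + b) * xe n $2"
    using Suc.IH ye_nonneg a_nonneg a_less_b by (auto intro!: mult_mono)
  then have "q$1 \<le> p$1"
    by (simp add: p_def q_def Fmat_mult_Fmat_mult_vec_nth)
  moreover have "p$2 = q$2"
    using second_Fmat_mult_xe_eq_ye by (simp add: p_def q_def)
  moreover have "0 \<le> Mw a b w $1$1" "0 \<le> Mw a b w $2$1"
    using Mw_nth_bounds[OF a_nonneg b_nonneg, of w] by simp_all
  ultimately show ?case
    by (simp add: X_Suc_mult_vec Y_Suc_mult_vec mat2_mult_vec_nth mult_left_mono flip: p_def q_def)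
qed

lemma second_Fmat_mult_xw_yw:
  "((Fmat a ** Fmat b) *v xw n)$2 + (1 + a) * (xw n $1 - yw n $1) + (b - a) * yw n $2
     = ((Fmat b ** Fmat a) *v yw n)$2"
proof -
  have second: "xw n $2 = yw n $1 + yw n $2 - xw n $1"
    using coord_sum_xw_eq_yw[of n] by (simp add: coord_sum_def)
  show ?thesis
    unfolding Fmat_mult_Fmat_mult_vec_nth second by (simp add: algebra_simps)
qed

lemma second_Fmat_mult_xw_le_yw:
  assumes "yw n $1 \<le> xw n $1"
  shows "((Fmat a ** Fmat b) *v xw n)$2 \<le> ((Fmat b ** Fmat a) *v yw n)$2"
proof -
  have "0 \<le> (1 + a) * (xw n $1 - yw n $1)" "0 \<le> (b - a) * yw n $2"
    using assms yw_nonneg(2) a_nonneg a_less_b by simp_all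
  then show ?thesis
    using second_Fmat_mult_xw_yw[of n] by linarith
qed

lemma coord_sum_Fmat_yw_le: "coord_sum (Fmat a *v yw n) \<le> coord_sum (yw (Suc n))"
proof -
  have "0 \<le> (Fmat a *v yw n)$1" "0 \<le> (Fmat a *v yw n)$2"
    using yw_nonneg a_nonneg by (simp_all add: Fmat_mult_vec_nth)
  then have "coord_sum (Fmat a *v yw n) \<le> coord_sum (Mw a b (True # w) *v (Fmat a *v yw n))"
    by (rule coord_sum_le_Mw_mult_vec[OF a_nonneg b_nonneg])
  also have "Mw a b (True # w) *v (Fmat a *v yw n) = yw (Suc n)"
    unfolding Y_Suc_mult_vec by (simp add: letterM_def matrix_vector_mul_assoc matrix_mul_assoc)
  finally show ?thesis .
qed

lemma xw_first_bounds: "0 \<le> xw n $1 - yw n $1 \<and> xw n $1 - yw n $1 \<le> (b - a) * coord_sum (yw n)"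
proof (induction n)
  case 0
  then show ?case
    using yw_nonneg[of 0] a_less_b by (simp add: wpow_def coord_sum_def)
next
  case (Suc n)
  define W where "W = Mw a b w"
  define d where "d = (Fmat a ** Fmat b) *v xw n - (Fmat b ** Fmat a) *v yw n"
  define D where "D = xw n $1 - yw n $1"
  have gap: "(W *v d)$1 = xw (Suc n) $1 - yw (Suc n) $1"
    by (simp add: W_def d_def X_Suc_mult_vec Y_Suc_mult_vec matrix_vector_mult_diff_distrib)
  have "coord_sum (W *v d) = 0"
    using coord_sum_xw_eq_yw[of "Suc n"]
    by (simp add: W_def d_def X_Suc_mult_vec Y_Suc_mult_vec matrix_vector_mult_diff_distrib
        coord_sum_def)
  then have weighted_gap: "(W$1$1 + W$2$1) * (W *v d)$1 = - d$2"
    using coord_sum_zero_first_coord det_Mw by (simp add: W_def)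
  have d2: "- d$2 = (1 + a) * D + (b - a) * yw n $2"
    using second_Fmat_mult_xw_yw[of n] by (simp add: d_def D_def)
  have "0 \<le> D" "D \<le> (b - a) * coord_sum (yw n)"
    using Suc.IH by (simp_all add: D_def)
  have "1 \<le> W$1$1 + W$2$1"
    using Mw_nth_bounds[OF a_nonneg b_nonneg, of w] by (simp add: W_def)
  have "0 \<le> - d$2"
    using second_Fmat_mult_xw_le_yw \<open>0 \<le> D\<close> by (simp add: d_def D_def)
  then have "0 \<le> (W$1$1 + W$2$1) * (W *v d)$1"
    by (simp only: weighted_gap)
  then have lower: "0 \<le> (W *v d)$1"
    using \<open>1 \<le> W$1$1 + W$2$1\<close> by (simp add: zero_le_mult_iff)
  have "(W *v d)$1 \<le> (W$1$1 + W$2$1) * (W *v d)$1"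
    using lower \<open>1 \<le> W$1$1 + W$2$1\<close> by (simp add: mult_le_cancel_right1)
  also have "\<dots> \<le> (1 + a) * ((b - a) * coord_sum (yw n)) + (b - a) * yw n $2"
    using weighted_gap d2 \<open>D \<le> (b - a) * coord_sum (yw n)\<close> a_nonneg by (simp add: mult_left_mono)
  also have "\<dots> = (b - a) * coord_sum (Fmat a *v yw n)"
    by (simp add: coord_sum_def Fmat_mult_vec_nth algebra_simps)
  also have "\<dots> \<le> (b - a) * coord_sum (yw (Suc n))"
    using coord_sum_Fmat_yw_le a_less_b by (simp add: mult_left_mono)
  finally show ?case
    using lower gap by simp
qed

lemma prefix_gain_ye_le_xe:
  assumes "1 \<le> j"
  shows "prefix_gain a b (False # True # w) j (ye n) \<le> prefix_gain a b (True # False # w) j (xe n)"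
proof -
  have le: "ye n $1 \<le> xe n $1" "ye n $2 \<le> xe n $2"
    using ye_le_xe by simp_all
  then have "a * ye n $1 \<le> b * xe n $1" "a * ye n $2 \<le> b * xe n $2"
    using ye_nonneg a_nonneg a_less_b by (auto intro!: mult_mono)
  from assms show ?thesis
  proof (cases rule: one_le_cases)
    case 1
    then show ?thesis
      using le \<open>a * ye n $1 \<le> b * xe n $1\<close> \<open>a * ye n $2 \<le> b * xe n $2\<close>
      by (simp add: prefix_gain_def letterM_def coord_sum_Fmat_mult Fmat_mult_vec_nth algebra_simps)
  next
    case (2 k)
    define p q where "p = (Fmat a ** Fmat b) *v xe n" and "q = (Fmat b ** Fmat a) *v ye n"
    have "p$2 = q$2"
      using second_Fmat_mult_xe_eq_ye by (simp add: p_def q_def)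
    have "coord_sum (xe n) - coord_sum (ye n) \<le> p$1 - q$1"
      using le \<open>a * ye n $1 \<le> b * xe n $1\<close> \<open>a * ye n $2 \<le> b * xe n $2\<close>
      by (simp add: p_def q_def coord_sum_def Fmat_mult_Fmat_mult_vec_nth algebra_simps)
    also have "\<dots> \<le> coord_sum (Mw a b (take k w) *v p) - coord_sum (Mw a b (take k w) *v q)"
      using Mw_nth_bounds[OF a_nonneg b_nonneg, of "take k w"] \<open>p$2 = q$2\<close> calculation le
      by (intro coord_sum_mult_diff_ge) (simp_all add: coord_sum_def)
    finally show ?thesis
      by (simp add: prefix_gain_def 2 p_def q_def letterM_def flip: matrix_vector_mul_assoc)
  qed
qed

lemma prefix_gain_yw_le_xw:
  assumes "1 \<le> j"
  shows "prefix_gain a b (False # True # w) j (yw n) \<le> prefix_gain a b (True # False # w) j (xw n)"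
proof -
  define D where "D = xw n $1 - yw n $1"
  have "0 \<le> D" "D \<le> (b - a) * coord_sum (yw n)"
    using xw_first_bounds by (simp_all add: D_def)
  have first: "xw n $1 = yw n $1 + D"
    by (simp add: D_def)
  have second: "xw n $2 = yw n $2 - D"
    using coord_sum_xw_eq_yw[of n] by (simp add: D_def coord_sum_def)
  from assms show ?thesis
  proof (cases rule: one_le_cases)
    case 1
    then show ?thesis
      using \<open>D \<le> (b - a) * coord_sum (yw n)\<close>
      by (simp add: prefix_gain_def letterM_def coord_sum_Fmat_mult Fmat_mult_vec_nth first second
          coord_sum_def algebra_simps)
  next
    case (2 k)
    define R Z where "R = Mw a b (take k w)" and "Z = Mw a b (drop k w)"
    define d where "d = (Fmat a ** Fmat b) *v xw n - (Fmat b ** Fmat a) *v yw n"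
    have ZR: "Z ** R = Mw a b w"
      using Mw_append[of a b "take k w" "drop k w"] by (simp add: Z_def R_def)
    have "coord_sum ((Z ** R) *v d) = 0"
      using coord_sum_xw_eq_yw[of "Suc n"]
      by (simp add: ZR d_def X_Suc_mult_vec Y_Suc_mult_vec matrix_vector_mult_diff_distrib
          coord_sum_def)
    moreover have "d$2 \<le> 0"
      using second_Fmat_mult_xw_le_yw \<open>0 \<le> D\<close> by (simp add: d_def D_def)
    moreover have "0 < (Z ** R)$1$1 + (Z ** R)$2$1"
      using Mw_nth_bounds[OF a_nonneg b_nonneg, of w] by (simp add: ZR add_pos_nonneg)
    ultimately have "0 \<le> coord_sum (R *v d)"
      using coord_sum_right_factor_nonneg[OF det_Mw[of a b "take k w", folded R_def]
          Mw_col_sum_le[OF a_nonneg b_nonneg, of "drop k w", folded Z_def]]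
      by blast
    then show ?thesis
      using coord_sum_xw_eq_yw[of n]
      by (simp add: prefix_gain_def 2 R_def d_def letterM_def matrix_vector_mult_diff_distrib
          coord_sum_def flip: matrix_vector_mul_assoc)
  qed
qed

text \<open>With \<open>W = M(w)\<close>, \<open>W\<^sub>2\<^sub>2 (x, 1) = (x W\<^sub>2\<^sub>2 - W\<^sub>1\<^sub>2) e\<^sub>1 + W e\<^sub>2\<close>, and
  \<open>x \<ge> \<phi>\<^sub>w(0) = W\<^sub>1\<^sub>2 / W\<^sub>2\<^sub>2\<close> makes the first coefficient non-negative; so by linearity
  it suffices to compare the two words on the starting vectors \<open>e\<^sub>1\<close> and \<open>W e\<^sub>2\<close>.\<close>

lemma prefix_gain_Y_le_X:
  assumes "phiw a b w 0 \<le> x" and "1 \<le> j"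
  shows "prefix_gain a b (False # True # w) j (Y n *v vector [x, 1])
       \<le> prefix_gain a b (True # False # w) j (X n *v vector [x, 1])"
proof -
  define E where "E z = prefix_gain a b (True # False # w) j (X n *v z)
                      - prefix_gain a b (False # True # w) j (Y n *v z)" for z
  define W where "W = Mw a b w"
  have E_linear: "E z = z$1 * E (vector [1, 0]) + z$2 * E (vector [0, 1])" for z
    using prefix_gain_linear[of a b "True # False # w" j "X n" z]
      prefix_gain_linear[of a b "False # True # w" j "Y n" z]
    by (simp add: E_def algebra_simps)
  have "0 \<le> E (vector [1, 0])"
    using prefix_gain_ye_le_xe[OF assms(2)] by (simp add: E_def)
  have "0 \<le> E (W *v vector [0, 1])"
    using prefix_gain_yw_le_xw[OF assms(2)] by (simp add: E_def W_def)
  have "1 \<le> W$2$2"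
    using Mw_nth_bounds[OF a_nonneg b_nonneg] by (simp add: W_def)
  have "W$1$2 \<le> x * W$2$2"
    using assms(1) \<open>1 \<le> W$2$2\<close> by (simp add: phiw_eq_Mw_ratio[OF a_nonneg b_nonneg] W_def divide_le_eq)
  have "W$2$2 * E (vector [x, 1]) = (x * W$2$2 - W$1$2) * E (vector [1, 0]) + E (W *v vector [0, 1])"
    using E_linear[of "vector [x, 1]"] E_linear[of "W *v vector [0, 1]"]
    by (simp add: mat2_mult_vec_nth algebra_simps)
  also have "\<dots> \<ge> 0"
    using \<open>0 \<le> E (vector [1, 0])\<close> \<open>0 \<le> E (W *v vector [0, 1])\<close> \<open>W$1$2 \<le> x * W$2$2\<close> by simp
  finally have "0 \<le> E (vector [x, 1])"
    using \<open>1 \<le> W$2$2\<close> by (simp add: zero_le_mult_iff)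
  then show ?thesis
    by (simp add: E_def)
qed

end

theorem proposition7:
  fixes a b x :: real and w :: "bool list"
  assumes "0 \<le> a" and "a < b" and "rev w = w" and "x \<ge> phiw a b w 0"
  shows "\<forall>n::nat.
     let m = length ([True, False] @ w);
         xs = (\<lambda>k. seqval a b ([True, False] @ w) n k x);
         ys = (\<lambda>k. seqval a b ([False, True] @ w) n k x)
     in (\<forall>k\<in>{1..m}. 0 \<le> xs k \<and> 0 \<le> ys k)
      \<and> (\<forall>k\<in>{1..<m}. xs k \<le> xs (k + 1) \<and> ys k \<le> ys (k + 1))
      \<and> (\<forall>j\<in>{1..m}. (\<Sum>k=1..j. xs k) \<ge> (\<Sum>k=1..j. ys k))"
proof -
  have "0 \<le> b"
    using assms(1,2) by simp
  have "0 \<le> x"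
    using phiw_nonneg[OF assms(1) \<open>0 \<le> b\<close>, of w] assms(4) by simp
  have "(\<Sum>k=1..j. seqval a b ([False, True] @ w) n k x) \<le> (\<Sum>k=1..j. seqval a b ([True, False] @ w) n k x)"
    if "1 \<le> j" "j \<le> length w + 2" for j n
    using prefix_gain_Y_le_X[OF assms that(1), of n] that(2)
      sum_seqval_eq_prefix_gain[of j "True # False # w"] sum_seqval_eq_prefix_gain[of j "False # True # w"]
    by simp
  then show ?thesis
    using seqval_nonneg[OF assms(1) \<open>0 \<le> b\<close> \<open>0 \<le> x\<close>] seqval_mono[OF assms(1) \<open>0 \<le> b\<close> \<open>0 \<le> x\<close>]
    by (auto simp: Let_def)
qed

end
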